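(* Let $f:\mathbb{R}^d\to\mathbb{R}$ be a two-layer linear network $f(x)=A\frac{1}{\sqrt{k}}Bx$ with $A\in\mathbb{R}^{1\times k}$, $B\in\mathbb{R}^{k\times d}$, where only $B$ is trained. Let $X\in\mathbb{R}^{d\times n}$, $y\in\mathbb{R}^{1\times n}$ be a dataset, and let $B^{(t)}$ be the weights after $t$ steps of gradient descent on the loss $\frac12\|y-A\frac{1}{\sqrt k}BX\|_2^2$ (with respect to $B$, $A=A^{(0)}$ fixed) with constant learning rate $\eta>0$, and $f^{(t)}(x)=A^{(0)}\frac{1}{\sqrt k}B^{(t)}x$. Suppose $\{A^{(0)}_i\}_{i=1}^k$ are i.i.d. random variables with $\mathbb{E}[A_i^2]=1$ and $B^{(0)}=\mathbf{0}$. Then for every $t$, $$\lim_{k\to\infty}{B^{(t)}}^TB^{(t)}=\lim_{k\to\infty}\nabla f^{(t)}\,{\nabla f^{(t)}}^T,$$ where $\nabla f^{(t)}\in\mathbb{R}^d$ is the (constant) gradient of the linear map $f^{(t)}$.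
   Context: The network width $k$ is sent to infinity, with $A^{(0)}$ drawn i.i.d. for each $k$; all quantities $B^{(t)}$, $f^{(t)}$ depend on $k$. *)

theory Defs
  imports "HOL-Probability.Probability"
begin

text \<open>Two-layer linear network of width k: f(x) = A (1/sqrt k) B x, with
 A the first k entries of a sequence (row vector 1 x k), B a k x d matrix
 (rows indexed by i < k, columns by the finite type 'd).\<close>
definition lin_net :: "nat \<Rightarrow> (nat \<Rightarrow> real) \<Rightarrow> (nat \<Rightarrow> 'd::finite \<Rightarrow> real) \<Rightarrow> ('d \<Rightarrow> real) \<Rightarrow> real" where
  "lin_net k A B x = (1 / sqrt (real k)) * (\<Sum>i<k. A i * (\<Sum>j\<in>UNIV. B i j * x j))"

definition sq_loss :: "nat \<Rightarrow> (nat \<Rightarrow> real) \<Rightarrow> ('d::finite \<Rightarrow> 'n::finite \<Rightarrow> real) \<Rightarrow> ('n \<Rightarrow> real)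
    \<Rightarrow> (nat \<Rightarrow> 'd \<Rightarrow> real) \<Rightarrow> real" where
  "sq_loss k A X y B = (1/2) * (\<Sum>m\<in>UNIV. (y m - lin_net k A B (\<lambda>j. X j m))^2)"

definition loss_grad :: "nat \<Rightarrow> (nat \<Rightarrow> real) \<Rightarrow> ('d::finite \<Rightarrow> 'n::finite \<Rightarrow> real) \<Rightarrow> ('n \<Rightarrow> real)
    \<Rightarrow> (nat \<Rightarrow> 'd \<Rightarrow> real) \<Rightarrow> nat \<Rightarrow> 'd \<Rightarrow> real" where
  "loss_grad k A X y B = (\<lambda>i j. deriv (\<lambda>s. sq_loss k A X y (B(i := (B i)(j := s)))) (B i j))"

primrec gd_iter :: "real \<Rightarrow> nat \<Rightarrow> (nat \<Rightarrow> real) \<Rightarrow> ('d::finite \<Rightarrow> 'n::finite \<Rightarrow> real) \<Rightarrow> ('n \<Rightarrow> real)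
    \<Rightarrow> nat \<Rightarrow> (nat \<Rightarrow> 'd \<Rightarrow> real)" where
  "gd_iter \<eta> k A X y 0 = (\<lambda>i j. 0)"
| "gd_iter \<eta> k A X y (Suc t) =
     (\<lambda>i j. gd_iter \<eta> k A X y t i j - \<eta> * loss_grad k A X y (gd_iter \<eta> k A X y t) i j)"

definition gram :: "nat \<Rightarrow> (nat \<Rightarrow> 'd \<Rightarrow> real) \<Rightarrow> 'd \<Rightarrow> 'd \<Rightarrow> real" where
  "gram k B = (\<lambda>j j'. \<Sum>i<k. B i j * B i j')"

text \<open>Gradient of a function R^d -> R at the origin (partial derivatives); for the
 linear map f^(t) this is its constant gradient.\<close>
definition input_grad :: "(('d::finite \<Rightarrow> real) \<Rightarrow> real) \<Rightarrow> 'd \<Rightarrow> real" where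
  "input_grad f = (\<lambda>j. deriv (\<lambda>s. f (\<lambda>j'. if j' = j then s else 0)) 0)"

end

theory Submission
  imports Defs
begin

(* Gradient descent from B = 0 only adds to B matrices of the form A^T v, so B^(t) stays rank one:
   B^(t)_ij = A_i w_j / sqrt k, where w = w(s) follows a recursion that does not involve the width
   and depends continuously on s = |A|^2 / k. Then B^T B = s w w^T and grad f (grad f)^T = s^2 w w^T,
   and the strong law of large numbers gives s --> E[A_1^2] = 1 almost surely, so both converge to
   w(1) w(1)^T.

   The strong law is proved for nonnegative i.i.d. integrable variables following Etemadi: truncating
   Z_i at i + 1 changes only finitely many terms almost surely (Borel-Cantelli); the variance of the
   truncated averages is summable along the geometric subsequence floor (a^n), which gives almost sure
   convergence there; monotonicity of the partial sums interpolates between consecutive subsequence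
   terms up to a factor a^2, and a --> 1 finishes the proof. *)

section \<open>Gradient descent stays rank one\<close>

(* Gradient descent for the width-free model x \<mapsto> s <w, x>; with s = |A|^2 / k it yields the
   vector w of B^(t)_ij = A_i w_j / sqrt k. *)
primrec reduced_gd :: "real \<Rightarrow> real \<Rightarrow> ('d::finite \<Rightarrow> 'n::finite \<Rightarrow> real) \<Rightarrow> ('n \<Rightarrow> real)
    \<Rightarrow> nat \<Rightarrow> 'd \<Rightarrow> real" where
  "reduced_gd \<eta> s X y 0 = (\<lambda>j. 0)"
| "reduced_gd \<eta> s X y (Suc t) = (\<lambda>j. reduced_gd \<eta> s X y t j
     + \<eta> * (\<Sum>m\<in>UNIV. (y m - s * (\<Sum>j'\<in>UNIV. reduced_gd \<eta> s X y t j' * X j' m)) * X j m))"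

lemma lin_net_fun_upd:
  assumes "i < k"
  shows "lin_net k A (B(i := (B i)(j := s))) x = lin_net k A B x + A i * (s - B i j) * x j / sqrt k"
proof -
  have inner: "(\<Sum>j'\<in>UNIV. (B(i := (B i)(j := s))) i' j' * x j')
      = (\<Sum>j'\<in>UNIV. B i' j' * x j') + (if i' = i then (s - B i j) * x j else 0)" for i'
  proof -
    have "(B(i := (B i)(j := s))) i' j' * x j'
        = B i' j' * x j' + (if j' = j then (if i' = i then (s - B i j) * x j else 0) else 0)" for j'
      by (auto simp: algebra_simps)
    then show ?thesis by (simp only: sum.distrib) simp
  qed
  show ?thesis
    unfolding lin_net_def inner using assms
    by (simp add: distrib_left sum.distrib if_distrib[of "(*) _"] add_divide_distrib
        cong: if_cong)
qed

lemma loss_grad_eq: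
  assumes "i < k"
  shows "loss_grad k A X y B i j
           = - A i / sqrt k * (\<Sum>m\<in>UNIV. (y m - lin_net k A B (\<lambda>j. X j m)) * X j m)"
proof -
  define r where "r m = y m - lin_net k A B (\<lambda>j. X j m)" for m
  define e where "e m = A i * X j m / sqrt k" for m
  have slice: "(\<lambda>s. sq_loss k A X y (B(i := (B i)(j := s))))
      = (\<lambda>s. (1/2) * (\<Sum>m\<in>UNIV. (r m - e m * (s - B i j))^2))"
    unfolding sq_loss_def r_def e_def using assms by (simp add: lin_net_fun_upd algebra_simps)
  have "((\<lambda>s. (1/2) * (\<Sum>m\<in>UNIV. (r m - e m * (s - B i j))^2)) has_real_derivative
      (\<Sum>m\<in>UNIV. - r m * e m)) (at (B i j))"
    by (auto intro!: derivative_eq_intros simp: sum_distrib_left ac_simps)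
  then have "loss_grad k A X y B i j = (\<Sum>m\<in>UNIV. - r m * e m)"
    unfolding loss_grad_def slice by (rule DERIV_imp_deriv)
  then show ?thesis
    by (simp add: r_def e_def sum_distrib_left sum_negf algebra_simps)
qed

lemma input_grad_lin_net: "input_grad (lin_net k A B) j = (\<Sum>i<k. A i * B i j) / sqrt k"
proof -
  define c where "c = (\<Sum>i<k. A i * B i j) / sqrt k"
  have "lin_net k A B (\<lambda>j'. if j' = j then s else 0) = s * c" for s
    unfolding lin_net_def c_def
    by (simp add: if_distrib[of "(*) _"] sum_distrib_left sum_divide_distrib algebra_simps cong: if_cong)
  moreover have "deriv (\<lambda>s. s * c) 0 = c"
    by (rule DERIV_imp_deriv) (auto intro!: derivative_eq_intros)
  ultimately show ?thesis unfolding input_grad_def c_def by simp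
qed

lemma lin_net_rank_one:
  assumes "k > 0" "\<And>i j. i < k \<Longrightarrow> B i j = A i / sqrt k * w j"
  shows "lin_net k A B x = (\<Sum>i<k. (A i)^2) / k * (\<Sum>j\<in>UNIV. w j * x j)"
proof -
  have "lin_net k A B x = (\<Sum>i<k. (A i)^2 * (\<Sum>j\<in>UNIV. w j * x j) / (sqrt k * sqrt k))"
    unfolding lin_net_def using assms(2)
    by (auto intro!: sum.cong simp: sum_distrib_left sum_divide_distrib power2_eq_square algebra_simps)
  then show ?thesis using assms(1) by (simp add: sum_distrib_right sum_divide_distrib)
qed

lemma gram_rank_one:
  assumes "k > 0" "\<And>i j. i < k \<Longrightarrow> B i j = A i / sqrt k * w j"
  shows "gram k B j j' = (\<Sum>i<k. (A i)^2) / k * (w j * w j')"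
proof -
  have "gram k B j j' = (\<Sum>i<k. (A i)^2 / (sqrt k * sqrt k) * (w j * w j'))"
    unfolding gram_def using assms(2) by (auto intro!: sum.cong simp: power2_eq_square)
  then show ?thesis using assms(1) by (simp add: sum_distrib_right sum_divide_distrib)
qed

lemma input_grad_rank_one:
  assumes "k > 0" "\<And>i j. i < k \<Longrightarrow> B i j = A i / sqrt k * w j"
  shows "input_grad (lin_net k A B) j = (\<Sum>i<k. (A i)^2) / k * w j"
proof -
  have "input_grad (lin_net k A B) j = (\<Sum>i<k. (A i)^2 * w j / (sqrt k * sqrt k))"
    unfolding input_grad_lin_net using assms(2)
    by (auto intro!: sum.cong simp: sum_divide_distrib power2_eq_square)
  then show ?thesis using assms(1) by (simp add: sum_distrib_right sum_divide_distrib)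
qed

lemma gd_iter_rank_one:
  assumes "k > 0" "i < k"
  shows "gd_iter \<eta> k A X y t i j = A i / sqrt k * reduced_gd \<eta> ((\<Sum>i<k. (A i)^2) / k) X y t j"
  using assms(2)
proof (induction t arbitrary: i j)
  case 0
  then show ?case by simp
next
  case (Suc t)
  define s where "s = (\<Sum>i<k. (A i)^2) / k"
  have "lin_net k A (gd_iter \<eta> k A X y t) x = s * (\<Sum>j\<in>UNIV. reduced_gd \<eta> s X y t j * x j)" for x
    unfolding s_def by (rule lin_net_rank_one[OF assms(1)]) (use Suc.IH in auto)
  then show ?case
    using Suc by (simp add: loss_grad_eq s_def[symmetric] algebra_simps)
qed

lemma isCont_reduced_gd: "isCont (\<lambda>s. reduced_gd \<eta> s X y t j) s0"
  by (induction t arbitrary: j) (simp_all add: continuous_intros)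

lemma gram_and_input_grad_outer_tendsto:
  fixes a :: "nat \<Rightarrow> real" and \<eta> :: real and X :: "'d::finite \<Rightarrow> 'n::finite \<Rightarrow> real"
    and y :: "'n \<Rightarrow> real" and t :: nat
  defines "B \<equiv> \<lambda>k. gd_iter \<eta> k a X y t" and "w \<equiv> reduced_gd \<eta> 1 X y t"
  assumes "(\<lambda>k. (\<Sum>i<k. (a i)^2) / k) \<longlonglongrightarrow> 1"
  shows "(\<lambda>k. gram k (B k) j j') \<longlonglongrightarrow> w j * w j'"
    and "(\<lambda>k. input_grad (lin_net k a (B k)) j * input_grad (lin_net k a (B k)) j')
           \<longlonglongrightarrow> w j * w j'"
proof -
  define s where "s k = (\<Sum>i<k. (a i)^2) / k" for k
  have s: "s \<longlonglongrightarrow> 1" using assms(3) unfolding s_def .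
  have ws: "(\<lambda>k. reduced_gd \<eta> (s k) X y t i) \<longlonglongrightarrow> w i" for i
    unfolding w_def by (rule isCont_tendsto_compose[OF isCont_reduced_gd s])
  have rank_one: "B k i j = a i / sqrt k * reduced_gd \<eta> (s k) X y t j" if "k > 0" "i < k" for k i j
    unfolding B_def s_def using gd_iter_rank_one[OF that] .
  have "eventually (\<lambda>k. gram k (B k) j j'
      = s k * (reduced_gd \<eta> (s k) X y t j * reduced_gd \<eta> (s k) X y t j')) sequentially"
    using eventually_gt_at_top[of 0]
    by eventually_elim (simp add: gram_rank_one[OF _ rank_one] s_def)
  moreover have "(\<lambda>k. s k * (reduced_gd \<eta> (s k) X y t j * reduced_gd \<eta> (s k) X y t j'))
      \<longlonglongrightarrow> w j * w j'"
    using tendsto_mult[OF s tendsto_mult[OF ws ws]] by simp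
  ultimately show "(\<lambda>k. gram k (B k) j j') \<longlonglongrightarrow> w j * w j'"
    by (simp add: Lim_transform_eventually eventually_mono)
  have "eventually (\<lambda>k. input_grad (lin_net k a (B k)) j * input_grad (lin_net k a (B k)) j'
      = s k * reduced_gd \<eta> (s k) X y t j * (s k * reduced_gd \<eta> (s k) X y t j')) sequentially"
    using eventually_gt_at_top[of 0]
    by eventually_elim (simp add: input_grad_rank_one[OF _ rank_one] s_def)
  moreover have "(\<lambda>k. s k * reduced_gd \<eta> (s k) X y t j * (s k * reduced_gd \<eta> (s k) X y t j'))
      \<longlonglongrightarrow> w j * w j'"
    using tendsto_mult[OF tendsto_mult[OF s ws] tendsto_mult[OF s ws]] by simp
  ultimately show "(\<lambda>k. input_grad (lin_net k a (B k)) j * input_grad (lin_net k a (B k)) j')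
      \<longlonglongrightarrow> w j * w j'"
    by (simp add: Lim_transform_eventually eventually_mono)
qed

section \<open>Averages along geometric subsequences\<close>

lemma cesaro_mean_tendsto:
  fixes a :: "nat \<Rightarrow> real"
  assumes "a \<longlonglongrightarrow> L"
  shows "(\<lambda>n. (\<Sum>i<n. a i) / n) \<longlonglongrightarrow> L"
  unfolding LIMSEQ_iff
proof (intro allI impI)
  fix \<epsilon> :: real assume "\<epsilon> > 0"
  then obtain N where N: "\<And>i. i \<ge> N \<Longrightarrow> \<bar>a i - L\<bar> < \<epsilon>/2"
    using assms unfolding LIMSEQ_iff by (metis half_gt_zero real_norm_def)
  define B where "B = (\<Sum>i<N. \<bar>a i - L\<bar>)"
  obtain N' :: nat where N': "2 * B / \<epsilon> < N'" using reals_Archimedean2 by blast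
  show "\<exists>n0. \<forall>n\<ge>n0. norm ((\<Sum>i<n. a i) / n - L) < \<epsilon>"
  proof (intro exI allI impI)
    fix n assume n: "n \<ge> max (Suc N) N'"
    have split: "{..<n} = {..<N} \<union> {N..<n}" using n by auto
    have "\<bar>\<Sum>i<n. a i - L\<bar> \<le> (\<Sum>i<n. \<bar>a i - L\<bar>)" by (rule sum_abs)
    also have "\<dots> = B + (\<Sum>i\<in>{N..<n}. \<bar>a i - L\<bar>)"
      unfolding B_def split by (rule sum.union_disjoint) auto
    also have "(\<Sum>i\<in>{N..<n}. \<bar>a i - L\<bar>) \<le> (\<Sum>i\<in>{N..<n}. \<epsilon>/2)"
      using N by (intro sum_mono) (simp add: less_imp_le)
    also have "\<dots> \<le> n * (\<epsilon>/2)"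
      using \<open>\<epsilon> > 0\<close> by (simp add: of_nat_diff)
    also have "B < n * (\<epsilon>/2)"
    proof -
      have "2 * B / \<epsilon> < n" using N' n by (smt (verit) of_nat_le_iff max.bounded_iff)
      then show ?thesis using \<open>\<epsilon> > 0\<close> by (simp add: field_simps)
    qed
    finally have "\<bar>\<Sum>i<n. a i - L\<bar> < n * \<epsilon>" by (simp add: mult.commute)
    moreover have "(\<Sum>i<n. a i) / n - L = (\<Sum>i<n. a i - L) / n"
      using n by (simp add: sum_subtractf field_simps)
    ultimately show "norm ((\<Sum>i<n. a i) / n - L) < \<epsilon>"
      using n by (simp add: abs_divide divide_less_eq mult.commute)
  qed
qed

definition floor_pow :: "real \<Rightarrow> nat \<Rightarrow> nat" where
  "floor_pow a n = nat \<lfloor>a ^ n\<rfloor>"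

lemma floor_pow_bounds:
  fixes a :: real
  assumes "1 \<le> a"
  shows "1 \<le> floor_pow a n" and "a ^ n / 2 \<le> floor_pow a n" and "a ^ n - 1 < floor_pow a n"
    and "floor_pow a n \<le> a ^ n"
proof -
  have "1 \<le> a ^ n" using assms by simp
  then have "1 \<le> \<lfloor>a ^ n\<rfloor>" by simp
  then have eq: "real (floor_pow a n) = of_int \<lfloor>a ^ n\<rfloor>" unfolding floor_pow_def by simp
  show "1 \<le> floor_pow a n" using \<open>1 \<le> \<lfloor>a ^ n\<rfloor>\<close> unfolding floor_pow_def by linarith
  show "a ^ n - 1 < floor_pow a n" "floor_pow a n \<le> a ^ n" unfolding eq by linarith+
  then show "a ^ n / 2 \<le> floor_pow a n" using \<open>1 \<le> \<lfloor>a ^ n\<rfloor>\<close> unfolding eq by linarith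
qed

lemma mono_floor_pow: "1 \<le> (a::real) \<Longrightarrow> mono (floor_pow a)"
  unfolding floor_pow_def by (intro monoI nat_mono floor_mono power_increasing)

lemma eventually_le_power:
  fixes a c :: real
  assumes "1 < a"
  shows "eventually (\<lambda>n. c \<le> a ^ n) sequentially"
proof -
  obtain N where "c < a ^ N" using real_arch_pow[OF assms] by blast
  then show ?thesis
    unfolding eventually_sequentially using assms
    by (meson less_imp_le order.trans power_increasing)
qed

lemma filterlim_floor_pow: "1 < (a::real) \<Longrightarrow> filterlim (floor_pow a) at_top sequentially"
  unfolding filterlim_at_top
proof
  fix K :: nat assume "1 < a"
  show "eventually (\<lambda>n. K \<le> floor_pow a n) sequentially"
    using eventually_le_power[OF \<open>1 < a\<close>, of "2 * K"]
  proof eventually_elim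
    case (elim n)
    then have "real K \<le> floor_pow a n" using floor_pow_bounds(2)[of a n] \<open>1 < a\<close> by simp
    then show ?case by simp
  qed
qed

lemma eventually_floor_pow_Suc_le:
  fixes a :: real
  assumes "1 < a"
  shows "eventually (\<lambda>n. floor_pow a (Suc n) \<le> a^2 * floor_pow a n) sequentially"
  using eventually_le_power[OF assms, of "a / (a - 1)"]
proof eventually_elim
  case (elim n)
  then have "a \<le> a ^ n * (a - 1)" using assms by (simp add: field_simps)
  have "a^2 * (a ^ n - 1) - a ^ Suc n = a * (a ^ n * (a - 1) - a)"
    by (simp add: power2_eq_square algebra_simps)
  then have "a ^ Suc n \<le> a^2 * (a ^ n - 1)"
    using \<open>a \<le> a ^ n * (a - 1)\<close> assms by (smt (verit) mult_nonneg_nonneg)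
  also have "\<dots> \<le> a^2 * floor_pow a n"
    using floor_pow_bounds(3)[of a n] assms by (intro mult_left_mono) auto
  finally show ?case
    using floor_pow_bounds(4)[of a "Suc n"] assms by simp
qed

lemma suminf_inverse_floor_pow_le:
  fixes a c :: real
  assumes a: "1 < a" and c: "0 < c"
  shows "(\<Sum>n. ennreal (if c \<le> floor_pow a n then 1 / floor_pow a n else 0))
           \<le> ennreal (2 / (1 - 1 / a) / c)"
proof -
  define n0 where "n0 = (LEAST n. c \<le> a ^ n)"
  have "\<exists>n. c \<le> a ^ n"
    using eventually_le_power[OF a, of c] unfolding eventually_sequentially by blast
  then have c_le: "c \<le> a ^ n0" unfolding n0_def by (rule LeastI_ex)
  define h where "h n = (if n0 \<le> n then 2 / c * (1 / a) ^ (n - n0) else 0)" for n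
  have h_nonneg: "0 \<le> h n" for n using a c by (simp add: h_def)
  have le_h: "(if c \<le> floor_pow a n then 1 / floor_pow a n else 0) \<le> h n" for n
  proof (cases "c \<le> floor_pow a n")
    case True
    then have "c \<le> a ^ n" using floor_pow_bounds(4)[of a n] a by simp
    then have "n0 \<le> n" unfolding n0_def by (rule Least_le)
    have "1 / floor_pow a n \<le> 1 / (a ^ n / 2)"
      using floor_pow_bounds(1,2)[of a n] a by (intro divide_left_mono mult_pos_pos) auto
    also have "a ^ n = a ^ n0 * a ^ (n - n0)"
      using \<open>n0 \<le> n\<close> by (simp flip: power_add)
    also have "1 / (a ^ n0 * a ^ (n - n0) / 2) = 2 / a ^ n0 * (1 / a) ^ (n - n0)"
      by (simp add: power_divide)
    also have "\<dots> \<le> 2 / c * (1 / a) ^ (n - n0)"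
      using c_le a c by (intro mult_right_mono divide_left_mono) auto
    finally show ?thesis using True \<open>n0 \<le> n\<close> by (simp add: h_def)
  qed (simp add: h_nonneg)
  have "(\<lambda>n. h (n + n0)) = (\<lambda>n. 2 / c * (1 / a) ^ n)" by (simp add: h_def)
  moreover have "(\<lambda>n. 2 / c * (1 / a) ^ n) sums (2 / c * (1 / (1 - 1 / a)))"
    using a by (intro sums_mult geometric_sums) simp
  ultimately have "h sums (2 / c * (1 / (1 - 1 / a)) + (\<Sum>n<n0. h n))"
    using sums_iff_shift[of h n0] by simp
  moreover have "(\<Sum>n<n0. h n) = 0" by (simp add: h_def)
  ultimately have "h sums (2 / c * (1 / (1 - 1 / a)))" by simp
  then have "(\<Sum>n. ennreal (h n)) = ennreal (2 / c * (1 / (1 - 1 / a)))"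
    using h_nonneg by (simp add: suminf_ennreal2 sums_summable sums_unique[of h, symmetric])
  moreover have "(\<Sum>n. ennreal (if c \<le> floor_pow a n then 1 / floor_pow a n else 0))
      \<le> (\<Sum>n. ennreal (h n))"
    by (intro suminf_le ennreal_leI le_h) auto
  ultimately show ?thesis by (simp add: field_simps)
qed

lemma eventually_bracketed:
  fixes k :: "nat \<Rightarrow> nat"
  assumes "mono k" and "filterlim k at_top sequentially" and "eventually P sequentially"
  shows "eventually (\<lambda>K. \<exists>n. P n \<and> k n \<le> K \<and> K < k (Suc n)) sequentially"
proof -
  obtain N where N: "\<And>n. N \<le> n \<Longrightarrow> P n" using assms(3) by (auto simp: eventually_sequentially)
  have "\<exists>n. P n \<and> k n \<le> K \<and> K < k (Suc n)" if "k N \<le> K" for K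
  proof -
    have "\<exists>n. K < k n"
      using assms(2) unfolding filterlim_at_top eventually_sequentially by (meson Suc_le_lessD order_refl)
    define n' where "n' = (LEAST n. K < k n)"
    have "K < k n'" unfolding n'_def using \<open>\<exists>n. K < k n\<close> by (rule LeastI_ex)
    have "N < n'"
      using \<open>K < k n'\<close> that monoD[OF assms(1), of n' N] by (cases "n' \<le> N") auto
    then obtain n where n: "n' = Suc n" "N \<le> n" by (cases n') auto
    have "k n \<le> K" using not_less_Least[of n "\<lambda>n. K < k n"] n unfolding n'_def by auto
    then show ?thesis using N[OF \<open>N \<le> n\<close>] \<open>K < k n'\<close> n(1) by blast
  qed
  then show ?thesis unfolding eventually_sequentially by blast
qed

lemma mono_ratio_sandwich:
  fixes S :: "nat \<Rightarrow> real" and c :: real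
  assumes S: "mono S" "\<And>K. 0 \<le> S K" and k: "0 < k" "k \<le> K" "K \<le> k'" "k' \<le> c * k"
  shows "S k / k / c \<le> S K / K" and "S K / K \<le> c * (S k' / k')"
proof -
  have "0 < c * k" using k by linarith
  then have "0 < c" using k by (simp add: zero_less_mult_iff)
  have "S k / k / c = S k / (c * k)" by simp
  also have "\<dots> \<le> S k / k'"
    using k \<open>0 < c * k\<close> S(2) by (intro divide_left_mono) auto
  also have "\<dots> \<le> S K / K"
    using k S by (intro frac_le) (auto simp: mono_def)
  finally show "S k / k / c \<le> S K / K" .
  have "S K / K \<le> S k' / k"
    using k S by (intro frac_le) (auto simp: mono_def)
  also have "\<dots> = S k' / k' * (k' / k)" using k by simp
  also have "\<dots> \<le> S k' / k' * c"
    using k S(2) by (intro mult_left_mono) (auto simp: pos_divide_le_eq mult.commute)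
  finally show "S K / K \<le> c * (S k' / k')" by (simp add: mult.commute)
qed

lemma eventually_ratio_sandwich_floor_pow:
  fixes S :: "nat \<Rightarrow> real" and a :: real
  defines "r \<equiv> \<lambda>n. S (floor_pow a n) / floor_pow a n"
  assumes S: "mono S" "\<And>K. 0 \<le> S K" and a: "1 < a" and P: "eventually P sequentially"
  shows "eventually (\<lambda>K. \<exists>n. P n \<and> P (Suc n) \<and> r n / a^2 \<le> S K / K \<and> S K / K \<le> a^2 * r (Suc n))
           sequentially"
proof -
  have "eventually (\<lambda>n. P (Suc n)) sequentially"
    using P by (rule eventually_sequentially_Suc[THEN iffD2])
  with P eventually_floor_pow_Suc_le[OF a]
  have "eventually (\<lambda>n. (P n \<and> P (Suc n)) \<and> floor_pow a (Suc n) \<le> a^2 * floor_pow a n) sequentially"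
    by eventually_elim simp
  then have "eventually (\<lambda>K. \<exists>n. ((P n \<and> P (Suc n)) \<and> floor_pow a (Suc n) \<le> a^2 * floor_pow a n)
      \<and> floor_pow a n \<le> K \<and> K < floor_pow a (Suc n)) sequentially"
    by (rule eventually_bracketed[OF mono_floor_pow[OF less_imp_le[OF a]] filterlim_floor_pow[OF a]])
  then show ?thesis
  proof (rule eventually_mono, elim exE conjE)
    fix K n assume "P n" "P (Suc n)" "floor_pow a (Suc n) \<le> a^2 * floor_pow a n"
      and "floor_pow a n \<le> K" "K < floor_pow a (Suc n)"
    with floor_pow_bounds(1)[of a n] a
    have "r n / a^2 \<le> S K / K \<and> S K / K \<le> a^2 * r (Suc n)"
      unfolding r_def by (intro conjI mono_ratio_sandwich[OF S]) auto
    with \<open>P n\<close> \<open>P (Suc n)\<close> show "\<exists>n. P n \<and> P (Suc n) \<and> r n / a^2 \<le> S K / K \<and> S K / K \<le> a^2 * r (Suc n)"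
      by blast
  qed
qed

lemma tendsto_ratio_from_floor_pow_subseqs:
  fixes S :: "nat \<Rightarrow> real" and \<alpha> :: "nat \<Rightarrow> real"
  assumes S: "mono S" "\<And>K. 0 \<le> S K" and \<alpha>: "\<And>m. 1 < \<alpha> m" "\<alpha> \<longlonglongrightarrow> 1"
    and lim: "\<And>m. (\<lambda>n. S (floor_pow (\<alpha> m) n) / floor_pow (\<alpha> m) n) \<longlonglongrightarrow> \<mu>"
  shows "(\<lambda>K. S K / K) \<longlonglongrightarrow> \<mu>"
proof (rule order_tendstoI)
  have sq: "(\<lambda>m. (\<alpha> m)^2 * c) \<longlonglongrightarrow> c" for c
    using tendsto_mult[OF tendsto_power[OF \<alpha>(2), of 2] tendsto_const[of c]] by simp
  fix b
  show "eventually (\<lambda>K. S K / K < b) sequentially" if "\<mu> < b"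
  proof -
    obtain m where m: "(\<alpha> m)^2 * \<mu> < b"
      using eventually_happens'[OF sequentially_bot order_tendstoD(2)[OF sq \<open>\<mu> < b\<close>]] by blast
    then have "\<mu> < b / (\<alpha> m)^2" using \<alpha>(1)[of m] by (simp add: pos_less_divide_eq mult.commute)
    with lim[of m] have "eventually (\<lambda>n. S (floor_pow (\<alpha> m) n) / floor_pow (\<alpha> m) n < b / (\<alpha> m)^2) sequentially"
      by (rule order_tendstoD(2))
    from eventually_ratio_sandwich_floor_pow[OF S \<alpha>(1)[of m] this] show ?thesis
      by eventually_elim (use \<alpha>(1)[of m] in \<open>auto simp: pos_less_divide_eq mult.commute\<close>)
  qed
  show "eventually (\<lambda>K. b < S K / K) sequentially" if "b < \<mu>"
  proof -
    obtain m where m: "(\<alpha> m)^2 * b < \<mu>"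
      using eventually_happens'[OF sequentially_bot order_tendstoD(2)[OF sq \<open>b < \<mu>\<close>]] by blast
    with lim[of m] have "eventually (\<lambda>n. (\<alpha> m)^2 * b < S (floor_pow (\<alpha> m) n) / floor_pow (\<alpha> m) n) sequentially"
      by (rule order_tendstoD(1))
    from eventually_ratio_sandwich_floor_pow[OF S \<alpha>(1)[of m] this] show ?thesis
    proof eventually_elim
      case (elim K)
      then obtain x where "(\<alpha> m)^2 * b < x" "x / (\<alpha> m)^2 \<le> S K / K" by blast
      moreover have "b < x / (\<alpha> m)^2"
        using calculation(1) \<alpha>(1)[of m] by (simp add: pos_less_divide_eq mult.commute)
      ultimately show ?case by linarith
    qed
  qed
qed

section \<open>The strong law of large numbers\<close>

lemma suminf_indicator_Suc_less_le:
  fixes z :: real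
  assumes "0 \<le> z"
  shows "(\<Sum>i. ennreal (if Suc i < z then 1 else 0)) \<le> ennreal z"
proof -
  have "(\<Sum>i. ennreal (if Suc i < z then 1 else 0))
      = (\<Sum>i<nat \<lfloor>z\<rfloor>. ennreal (if Suc i < z then 1 else 0))"
  proof (rule suminf_finite)
    fix i assume "i \<notin> {..<nat \<lfloor>z\<rfloor>}"
    then have "\<lfloor>z\<rfloor> \<le> int i" by simp
    then have "z < Suc i" by linarith
    then show "ennreal (if Suc i < z then 1 else 0) = 0" by simp
  qed simp
  also have "\<dots> \<le> (\<Sum>i<nat \<lfloor>z\<rfloor>. 1)" by (intro sum_mono) auto
  also have "\<dots> = ennreal (nat \<lfloor>z\<rfloor>)" by (simp add: ennreal_of_nat_eq_real_of_nat)
  also have "\<dots> \<le> ennreal z" using assms by (intro ennreal_leI) linarith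
  finally show ?thesis .
qed

definition trunc_at :: "real \<Rightarrow> real \<Rightarrow> real" where
  "trunc_at c z = (if z \<le> c then z else 0)"

lemma borel_measurable_trunc_at[measurable]: "trunc_at c \<in> borel_measurable borel"
  unfolding trunc_at_def by measurable

lemma suminf_trunc_at_floor_pow_sq_le:
  fixes a z :: real
  assumes "1 < a" "0 \<le> z"
  shows "(\<Sum>n. ennreal ((trunc_at (floor_pow a n) z)^2 / floor_pow a n))
           \<le> ennreal (2 / (1 - 1 / a) * z)"
proof (cases "z = 0")
  case True
  then show ?thesis by (simp add: trunc_at_def)
next
  case False
  with assms have "0 < z" by simp
  have "ennreal ((trunc_at (floor_pow a n) z)^2 / floor_pow a n)
      = ennreal (z^2) * ennreal (if z \<le> floor_pow a n then 1 / floor_pow a n else 0)" for n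
    by (simp add: trunc_at_def ennreal_mult'[symmetric])
  then have "(\<Sum>n. ennreal ((trunc_at (floor_pow a n) z)^2 / floor_pow a n))
      = ennreal (z^2) * (\<Sum>n. ennreal (if z \<le> floor_pow a n then 1 / floor_pow a n else 0))"
    by simp
  also have "\<dots> \<le> ennreal (z^2) * ennreal (2 / (1 - 1 / a) / z)"
    by (intro mult_left_mono suminf_inverse_floor_pow_le assms \<open>0 < z\<close>) simp
  also have "\<dots> = ennreal (z^2 * (2 / (1 - 1 / a) / z))"
    by (rule ennreal_mult'[symmetric]) simp
  also have "z^2 * (2 / (1 - 1 / a) / z) = 2 / (1 - 1 / a) * z"
    using \<open>0 < z\<close> by (simp add: power2_eq_square)
  finally show ?thesis .
qed

lemma AE_summable_if_suminf_nn_integral_finite: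
  fixes f :: "nat \<Rightarrow> 'a \<Rightarrow> real"
  assumes [measurable]: "\<And>n. f n \<in> borel_measurable M" and nonneg: "\<And>n x. 0 \<le> f n x"
    and finite: "(\<Sum>n. \<integral>\<^sup>+x. ennreal (f n x) \<partial>M) < \<infinity>"
  shows "AE x in M. summable (\<lambda>n. f n x)"
proof -
  have "(\<integral>\<^sup>+x. (\<Sum>n. ennreal (f n x)) \<partial>M) \<noteq> \<infinity>"
    using finite by (simp add: nn_integral_suminf)
  then have "AE x in M. (\<Sum>n. ennreal (f n x)) \<noteq> \<infinity>"
    by (intro nn_integral_PInf_AE) auto
  then show ?thesis
    by eventually_elim (use nonneg in \<open>auto intro: summable_suminf_not_top\<close>)
qed

lemma (in prob_space) expectation_square_sum_indep:
  fixes D :: "'i \<Rightarrow> 'a \<Rightarrow> real"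
  assumes indep: "indep_vars (\<lambda>_. borel) D I" and "finite I"
    and sq_int: "\<And>i. i \<in> I \<Longrightarrow> integrable M (\<lambda>\<omega>. (D i \<omega>)^2)"
    and centered: "\<And>i. i \<in> I \<Longrightarrow> expectation (D i) = 0"
  shows "integrable M (\<lambda>\<omega>. (\<Sum>i\<in>I. D i \<omega>)^2)"
    and "expectation (\<lambda>\<omega>. (\<Sum>i\<in>I. D i \<omega>)^2) = (\<Sum>i\<in>I. expectation (\<lambda>\<omega>. (D i \<omega>)^2))"
proof -
  have meas: "D i \<in> borel_measurable M" if "i \<in> I" for i
    using indep that unfolding indep_vars_def by auto
  have int: "integrable M (D i)" if "i \<in> I" for i
    using square_integrable_imp_integrable[OF meas sq_int] that by simp
  have prod: "integrable M (\<lambda>\<omega>. D i \<omega> * D j \<omega>)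
      \<and> expectation (\<lambda>\<omega>. D i \<omega> * D j \<omega>) = (if i = j then expectation (\<lambda>\<omega>. (D i \<omega>)^2) else 0)"
    if "i \<in> I" "j \<in> I" for i j
  proof (cases "i = j")
    case True
    with sq_int that show ?thesis by (simp add: power2_eq_square)
  next
    case False
    have "indep_var borel (D i) borel (\<lambda>\<omega>. \<Sum>j\<in>{j}. D j \<omega>)"
      using False that by (intro indep_vars_sum indep_vars_subset[OF indep]) auto
    then have "indep_var borel (D i) borel (D j)" by simp
    with False that int centered show ?thesis
      by (simp add: indep_var_integrable indep_var_lebesgue_integral)
  qed
  have sq_sum: "(\<Sum>i\<in>I. D i \<omega>)^2 = (\<Sum>i\<in>I. \<Sum>j\<in>I. D i \<omega> * D j \<omega>)" for \<omega>
    by (simp add: power2_eq_square sum_product)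
  show "integrable M (\<lambda>\<omega>. (\<Sum>i\<in>I. D i \<omega>)^2)"
    unfolding sq_sum using prod by auto
  show "expectation (\<lambda>\<omega>. (\<Sum>i\<in>I. D i \<omega>)^2) = (\<Sum>i\<in>I. expectation (\<lambda>\<omega>. (D i \<omega>)^2))"
    unfolding sq_sum using prod \<open>finite I\<close> by (simp add: Bochner_Integration.integral_sum sum.delta)
qed

lemma sum_eq_sum_trunc_at_plus_const:
  fixes z :: "nat \<Rightarrow> real"
  assumes "eventually (\<lambda>i. z i \<le> Suc i) sequentially"
  obtains c where "eventually (\<lambda>K. (\<Sum>i<K. z i) = (\<Sum>i<K. trunc_at (Suc i) (z i)) + c) sequentially"
proof -
  obtain I where I: "\<And>i. I \<le> i \<Longrightarrow> z i \<le> Suc i" using assms by (auto simp: eventually_sequentially)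
  define c where "c = (\<Sum>i<I. z i - trunc_at (Suc i) (z i))"
  have "(\<Sum>i<K. z i) = (\<Sum>i<K. trunc_at (Suc i) (z i)) + c" if "I \<le> K" for K
  proof -
    have "(\<Sum>i<K. z i - trunc_at (Suc i) (z i)) = c"
      unfolding c_def using that I by (intro sum.mono_neutral_right) (auto simp: trunc_at_def)
    then show ?thesis by (simp add: sum_subtractf)
  qed
  then show ?thesis using that[of c] by (auto simp: eventually_sequentially)
qed

locale nonneg_iid = prob_space +
  fixes Z :: "nat \<Rightarrow> 'a \<Rightarrow> real"
  assumes indep: "indep_vars (\<lambda>_. borel) Z UNIV"
    and ident: "\<And>i. distr M borel (Z i) = distr M borel (Z 0)"
    and nonneg: "\<And>i \<omega>. 0 \<le> Z i \<omega>"
    and integrable_Z0: "integrable M (Z 0)"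
begin

lemma measurable_Z[measurable]: "Z i \<in> borel_measurable M"
  using indep unfolding indep_vars_def by auto

lemma nn_integral_ident:
  assumes [measurable]: "g \<in> borel_measurable borel"
  shows "(\<integral>\<^sup>+\<omega>. g (Z i \<omega>) \<partial>M) = (\<integral>\<^sup>+\<omega>. g (Z 0 \<omega>) \<partial>M)"
  using nn_integral_distr[of "Z i" M borel g] nn_integral_distr[of "Z 0" M borel g] ident[of i]
  by simp

lemma integral_ident:
  fixes g :: "real \<Rightarrow> real"
  assumes [measurable]: "g \<in> borel_measurable borel"
  shows "expectation (\<lambda>\<omega>. g (Z i \<omega>)) = expectation (\<lambda>\<omega>. g (Z 0 \<omega>))"
  using integral_distr[of "Z i" M borel g] integral_distr[of "Z 0" M borel g] ident[of i]
  by simp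

lemma AE_eventually_le_Suc: "AE \<omega> in M. eventually (\<lambda>i. Z i \<omega> \<le> Suc i) sequentially"
proof -
  define f where "f i \<omega> = (if Suc i < Z i \<omega> then 1 else 0 :: real)" for i \<omega>
  have f_meas: "f i \<in> borel_measurable M" for i unfolding f_def by measurable
  have "(\<integral>\<^sup>+\<omega>. ennreal (f i \<omega>) \<partial>M) = (\<integral>\<^sup>+\<omega>. ennreal (if Suc i < Z 0 \<omega> then 1 else 0) \<partial>M)" for i
    using nn_integral_ident[of "\<lambda>z. ennreal (if Suc i < z then 1 else 0)" i] by (simp add: f_def)
  then have "(\<Sum>i. \<integral>\<^sup>+\<omega>. ennreal (f i \<omega>) \<partial>M)
      = (\<integral>\<^sup>+\<omega>. (\<Sum>i. ennreal (if Suc i < Z 0 \<omega> then 1 else 0)) \<partial>M)"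
    by (simp add: nn_integral_suminf)
  also have "\<dots> \<le> (\<integral>\<^sup>+\<omega>. ennreal (Z 0 \<omega>) \<partial>M)"
    by (intro nn_integral_mono suminf_indicator_Suc_less_le nonneg)
  also have "\<dots> < \<infinity>"
    using integrable_Z0 nonneg by (simp add: integrable_iff_bounded)
  finally have "AE \<omega> in M. summable (\<lambda>i. f i \<omega>)"
    by (rule AE_summable_if_suminf_nn_integral_finite[OF f_meas, rotated]) (simp add: f_def)
  then show ?thesis
  proof eventually_elim
    case (elim \<omega>)
    have "eventually (\<lambda>i. f i \<omega> < 1) sequentially"
      using summable_LIMSEQ_zero[OF elim] by (rule order_tendstoD(2)) simp
    then show ?case by eventually_elim (auto simp: f_def split: if_splits)
  qed
qed

definition trunc_mean :: "nat \<Rightarrow> real" where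
  "trunc_mean i = expectation (\<lambda>\<omega>. trunc_at (Suc i) (Z 0 \<omega>))"

lemma trunc_mean_tendsto: "trunc_mean \<longlonglongrightarrow> expectation (Z 0)"
  unfolding trunc_mean_def
proof (rule integral_dominated_convergence[where w="Z 0"])
  show "AE \<omega> in M. (\<lambda>i. trunc_at (Suc i) (Z 0 \<omega>)) \<longlonglongrightarrow> Z 0 \<omega>"
  proof (rule AE_I2)
    fix \<omega>
    obtain N :: nat where "Z 0 \<omega> \<le> N" using real_arch_simple by blast
    then have "eventually (\<lambda>i. trunc_at (Suc i) (Z 0 \<omega>) = Z 0 \<omega>) sequentially"
      unfolding eventually_sequentially trunc_at_def by (intro exI[of _ N]) auto
    then show "(\<lambda>i. trunc_at (Suc i) (Z 0 \<omega>)) \<longlonglongrightarrow> Z 0 \<omega>" by (rule tendsto_eventually)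
  qed
  show "AE \<omega> in M. norm (trunc_at (Suc i) (Z 0 \<omega>)) \<le> Z 0 \<omega>" for i
    using nonneg by (intro AE_I2) (auto simp: trunc_at_def)
qed (use integrable_Z0 in auto)

lemma integrable_trunc_at_power: "integrable M (\<lambda>\<omega>. (trunc_at c (Z i \<omega>))^n)"
proof (rule integrable_const_bound[where B="\<bar>c\<bar>^n"])
  show "AE \<omega> in M. norm ((trunc_at c (Z i \<omega>))^n) \<le> \<bar>c\<bar>^n"
    using nonneg by (intro AE_I2) (auto simp: trunc_at_def norm_power intro!: power_mono)
qed measurable

definition centered_trunc :: "nat \<Rightarrow> 'a \<Rightarrow> real" where
  "centered_trunc i \<omega> = trunc_at (Suc i) (Z i \<omega>) - trunc_mean i"

lemma measurable_centered_trunc[measurable]: "centered_trunc i \<in> borel_measurable M"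
  unfolding centered_trunc_def by measurable

lemma expectation_trunc_at: "expectation (\<lambda>\<omega>. trunc_at (Suc i) (Z i \<omega>)) = trunc_mean i"
  unfolding trunc_mean_def by (rule integral_ident) measurable

lemma expectation_centered_trunc: "expectation (centered_trunc i) = 0"
proof -
  have "expectation (centered_trunc i) = expectation (\<lambda>\<omega>. trunc_at (Suc i) (Z i \<omega>)) - trunc_mean i"
    using integrable_trunc_at_power[of "Suc i" i 1] by (simp add: centered_trunc_def[abs_def] prob_space)
  then show ?thesis unfolding expectation_trunc_at by simp
qed

lemma integrable_centered_trunc_sq: "integrable M (\<lambda>\<omega>. (centered_trunc i \<omega>)^2)"
  using integrable_trunc_at_power[of "Suc i" i 1] integrable_trunc_at_power[of "Suc i" i 2]
  by (simp add: centered_trunc_def power2_diff)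

lemma expectation_centered_trunc_sq_le:
  assumes "Suc i \<le> c"
  shows "expectation (\<lambda>\<omega>. (centered_trunc i \<omega>)^2) \<le> expectation (\<lambda>\<omega>. (trunc_at c (Z 0 \<omega>))^2)"
proof -
  have "expectation (\<lambda>\<omega>. (centered_trunc i \<omega>)^2) = variance (\<lambda>\<omega>. trunc_at (Suc i) (Z i \<omega>))"
    by (simp only: centered_trunc_def expectation_trunc_at)
  also have "\<dots> = expectation (\<lambda>\<omega>. (trunc_at (Suc i) (Z i \<omega>))^2) - (trunc_mean i)^2"
    using integrable_trunc_at_power[of "Suc i" i 1] integrable_trunc_at_power[of "Suc i" i 2]
    by (subst variance_eq) (simp_all only: power_one_right expectation_trunc_at)
  also have "expectation (\<lambda>\<omega>. (trunc_at (Suc i) (Z i \<omega>))^2)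
      = expectation (\<lambda>\<omega>. (trunc_at (Suc i) (Z 0 \<omega>))^2)"
    by (rule integral_ident) measurable
  also have "\<dots> \<le> expectation (\<lambda>\<omega>. (trunc_at c (Z 0 \<omega>))^2)"
    using nonneg assms by (intro integral_mono integrable_trunc_at_power) (auto simp: trunc_at_def)
  finally show ?thesis using zero_le_power2[of "trunc_mean i"] by linarith
qed

lemma indep_vars_centered_trunc: "indep_vars (\<lambda>_. borel) centered_trunc UNIV"
  using indep_vars_compose2[OF indep, of "\<lambda>i z. trunc_at (Suc i) z - trunc_mean i" "\<lambda>_. borel"]
  by (simp add: centered_trunc_def[abs_def])

lemma nn_integral_centered_trunc_avg_sq_le:
  "(\<integral>\<^sup>+\<omega>. ennreal (((\<Sum>i<K. centered_trunc i \<omega>) / K)^2) \<partial>M)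
     \<le> (\<integral>\<^sup>+\<omega>. ennreal ((trunc_at K (Z 0 \<omega>))^2 / K) \<partial>M)"
proof -
  have "indep_vars (\<lambda>_. borel) centered_trunc {..<K}"
    by (rule indep_vars_subset[OF indep_vars_centered_trunc]) simp
  note sum_sq = expectation_square_sum_indep[OF this finite_lessThan
      integrable_centered_trunc_sq expectation_centered_trunc]
  have "(\<Sum>i<K. expectation (\<lambda>\<omega>. (centered_trunc i \<omega>)^2))
      \<le> (\<Sum>i<K. expectation (\<lambda>\<omega>. (trunc_at K (Z 0 \<omega>))^2))"
    by (intro sum_mono expectation_centered_trunc_sq_le) simp
  then have "expectation (\<lambda>\<omega>. ((\<Sum>i<K. centered_trunc i \<omega>) / K)^2)
      \<le> (\<Sum>i<K. expectation (\<lambda>\<omega>. (trunc_at K (Z 0 \<omega>))^2)) / K^2"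
    by (simp add: power_divide sum_sq(2) divide_right_mono)
  also have "\<dots> = expectation (\<lambda>\<omega>. (trunc_at K (Z 0 \<omega>))^2 / K)"
    by (cases "K = 0") (simp_all add: power2_eq_square)
  finally have "expectation (\<lambda>\<omega>. ((\<Sum>i<K. centered_trunc i \<omega>) / K)^2)
      \<le> expectation (\<lambda>\<omega>. (trunc_at K (Z 0 \<omega>))^2 / K)" .
  moreover have "integrable M (\<lambda>\<omega>. ((\<Sum>i<K. centered_trunc i \<omega>) / K)^2)"
    using sum_sq(1) by (simp add: power_divide)
  moreover have "integrable M (\<lambda>\<omega>. (trunc_at K (Z 0 \<omega>))^2 / K)"
    using integrable_trunc_at_power by simp
  ultimately show ?thesis
    by (simp add: nn_integral_eq_integral)
qed

lemma AE_centered_trunc_avg_floor_pow_tendsto: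
  assumes "1 < a"
  shows "AE \<omega> in M. (\<lambda>n. (\<Sum>i<floor_pow a n. centered_trunc i \<omega>) / floor_pow a n) \<longlonglongrightarrow> 0"
proof -
  have "(\<Sum>n. \<integral>\<^sup>+\<omega>. ennreal (((\<Sum>i<floor_pow a n. centered_trunc i \<omega>) / floor_pow a n)^2) \<partial>M)
      \<le> (\<Sum>n. \<integral>\<^sup>+\<omega>. ennreal ((trunc_at (floor_pow a n) (Z 0 \<omega>))^2 / floor_pow a n) \<partial>M)"
    by (intro suminf_le nn_integral_centered_trunc_avg_sq_le) auto
  also have "\<dots> = (\<integral>\<^sup>+\<omega>. (\<Sum>n. ennreal ((trunc_at (floor_pow a n) (Z 0 \<omega>))^2 / floor_pow a n)) \<partial>M)"
    by (rule nn_integral_suminf[symmetric]) measurable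
  also have "\<dots> \<le> (\<integral>\<^sup>+\<omega>. ennreal (2 / (1 - 1 / a) * Z 0 \<omega>) \<partial>M)"
    using assms nonneg by (intro nn_integral_mono suminf_trunc_at_floor_pow_sq_le) auto
  also have "\<dots> < \<infinity>"
    using integrable_Z0 nonneg assms by (simp add: nn_integral_eq_integral)
  finally have "AE \<omega> in M. summable (\<lambda>n. ((\<Sum>i<floor_pow a n. centered_trunc i \<omega>) / floor_pow a n)^2)"
    by (rule AE_summable_if_suminf_nn_integral_finite[rotated 2]) auto
  then show ?thesis
  proof eventually_elim
    case (elim \<omega>)
    then have "(\<lambda>n. sqrt (((\<Sum>i<floor_pow a n. centered_trunc i \<omega>) / floor_pow a n)^2)) \<longlonglongrightarrow> sqrt 0"
      by (intro tendsto_real_sqrt summable_LIMSEQ_zero)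
    then have "(\<lambda>n. \<bar>(\<Sum>i<floor_pow a n. centered_trunc i \<omega>) / floor_pow a n\<bar>) \<longlonglongrightarrow> 0"
      by (simp only: real_sqrt_abs real_sqrt_zero)
    then show ?case by (rule tendsto_rabs_zero_cancel)
  qed
qed

lemma AE_avg_floor_pow_tendsto:
  assumes "1 < a"
  shows "AE \<omega> in M. (\<lambda>n. (\<Sum>i<floor_pow a n. Z i \<omega>) / floor_pow a n) \<longlonglongrightarrow> expectation (Z 0)"
  using AE_centered_trunc_avg_floor_pow_tendsto[OF assms] AE_eventually_le_Suc
proof eventually_elim
  case (elim \<omega>)
  define k where "k = floor_pow a"
  have k: "filterlim k at_top sequentially" unfolding k_def by (rule filterlim_floor_pow[OF assms])
  obtain c where "eventually (\<lambda>K. (\<Sum>i<K. Z i \<omega>) = (\<Sum>i<K. trunc_at (Suc i) (Z i \<omega>)) + c) sequentially"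
    using elim(2) by (rule sum_eq_sum_trunc_at_plus_const)
  from eventually_compose_filterlim[OF this k]
  have "eventually (\<lambda>n. (\<Sum>i<k n. centered_trunc i \<omega>) / k n + (\<Sum>i<k n. trunc_mean i) / k n + c / k n
      = (\<Sum>i<k n. Z i \<omega>) / k n) sequentially"
    by eventually_elim (simp add: centered_trunc_def sum_subtractf add_divide_distrib diff_divide_distrib)
  moreover have "(\<lambda>n. (\<Sum>i<k n. centered_trunc i \<omega>) / k n + (\<Sum>i<k n. trunc_mean i) / k n + c / k n)
      \<longlonglongrightarrow> 0 + expectation (Z 0) + 0"
    using elim(1) unfolding k_def[symmetric]
    by (intro tendsto_add filterlim_compose[OF cesaro_mean_tendsto[OF trunc_mean_tendsto] k]
        tendsto_divide_0[OF tendsto_const] filterlim_at_top_imp_at_infinity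
        filterlim_compose[OF filterlim_real_sequentially k])
  ultimately show ?case
    unfolding k_def by (simp add: Lim_transform_eventually)
qed

theorem strong_law_of_large_numbers:
  "AE \<omega> in M. (\<lambda>K. (\<Sum>i<K. Z i \<omega>) / K) \<longlonglongrightarrow> expectation (Z 0)"
proof -
  define \<alpha> where "\<alpha> m = 1 + inverse (real (Suc m))" for m
  have \<alpha>: "1 < \<alpha> m" for m by (simp add: \<alpha>_def)
  have "\<alpha> \<longlonglongrightarrow> 1 + 0" unfolding \<alpha>_def by (intro tendsto_add tendsto_const LIMSEQ_inverse_real_of_nat)
  then have "\<alpha> \<longlonglongrightarrow> 1" by simp
  have "AE \<omega> in M. \<forall>m. (\<lambda>n. (\<Sum>i<floor_pow (\<alpha> m) n. Z i \<omega>) / floor_pow (\<alpha> m) n) \<longlonglongrightarrow> expectation (Z 0)"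
    unfolding AE_all_countable using AE_avg_floor_pow_tendsto[OF \<alpha>] by blast
  then show ?thesis
  proof eventually_elim
    case (elim \<omega>)
    have "mono (\<lambda>K. \<Sum>i<K. Z i \<omega>)" using nonneg by (intro monoI sum_mono2) auto
    then show ?case
      using elim nonneg
      by (intro tendsto_ratio_from_floor_pow_subseqs[OF _ _ \<alpha> \<open>\<alpha> \<longlonglongrightarrow> 1\<close>]) (auto intro: sum_nonneg)
  qed
qed

end

lemma distr_compose_eq:
  assumes "X \<in> borel_measurable M" "Y \<in> borel_measurable M" "g \<in> borel_measurable borel"
    and "distr M borel X = distr M borel Y"
  shows "distr M borel (\<lambda>\<omega>. g (X \<omega>)) = distr M borel (\<lambda>\<omega>. g (Y \<omega>))"
proof -
  have "distr M borel (\<lambda>\<omega>. g (X \<omega>)) = distr (distr M borel X) borel g"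
    using distr_distr[OF assms(3,1)] by (simp add: comp_def)
  also have "\<dots> = distr M borel (\<lambda>\<omega>. g (Y \<omega>))"
    using distr_distr[OF assms(3,2)] assms(4) by (simp add: comp_def)
  finally show ?thesis .
qed

theorem proposition3:
  fixes M :: "'a measure" and A :: "nat \<Rightarrow> 'a \<Rightarrow> real"
    and X :: "'d::finite \<Rightarrow> 'n::finite \<Rightarrow> real" and y :: "'n \<Rightarrow> real"
    and \<eta> :: real and t :: nat
  assumes "prob_space M"
    and "\<eta> > 0"
    and "prob_space.indep_vars M (\<lambda>_. borel) A UNIV"
    and "\<forall>i. distr M borel (A i) = distr M borel (A 0)"
    and "integrable M (\<lambda>\<omega>. (A 0 \<omega>)^2)"
    and "(\<integral>\<omega>. (A 0 \<omega>)^2 \<partial>M) = 1"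
  shows "AE \<omega> in M. \<exists>L :: 'd \<Rightarrow> 'd \<Rightarrow> real. \<forall>j j'.
           (\<lambda>k. gram k (gd_iter \<eta> k (\<lambda>i. A i \<omega>) X y t) j j') \<longlonglongrightarrow> L j j'
         \<and> (\<lambda>k. input_grad (lin_net k (\<lambda>i. A i \<omega>) (gd_iter \<eta> k (\<lambda>i. A i \<omega>) X y t)) j
               * input_grad (lin_net k (\<lambda>i. A i \<omega>) (gd_iter \<eta> k (\<lambda>i. A i \<omega>) X y t)) j')
             \<longlonglongrightarrow> L j j'"
proof -
  interpret prob_space M by (rule assms(1))
  have [measurable]: "A i \<in> borel_measurable M" for i
    using assms(3) unfolding indep_vars_def by auto
  interpret nonneg_iid M "\<lambda>i \<omega>. (A i \<omega>)^2"
  proof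
    show "indep_vars (\<lambda>_. borel) (\<lambda>i \<omega>. (A i \<omega>)^2) UNIV"
      using indep_vars_compose2[OF assms(3), of "\<lambda>_ x. x^2"] by simp
    show "distr M borel (\<lambda>\<omega>. (A i \<omega>)^2) = distr M borel (\<lambda>\<omega>. (A 0 \<omega>)^2)" for i
      by (rule distr_compose_eq) (use assms(4) in auto)
  qed (use assms(5) in auto)
  have "AE \<omega> in M. (\<lambda>k. (\<Sum>i<k. (A i \<omega>)^2) / k) \<longlonglongrightarrow> 1"
    using strong_law_of_large_numbers assms(6) by simp
  then show ?thesis
  proof eventually_elim
    case (elim \<omega>)
    show ?case
      by (intro exI[of _ "\<lambda>j j'. reduced_gd \<eta> 1 X y t j * reduced_gd \<eta> 1 X y t j'"] allI conjI
          gram_and_input_grad_outer_tendsto[OF elim])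
  qed
qed

end
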